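(* Let $\mathscr H$ be a complex Hilbert space and $\mathbf{T}=(T_1,\dots,T_d)\in\mathbb{B}(\mathscr H)^d$. Then for every $x\in\mathscr H$, $$\sum_{k=1}^{d}\|T_kx\|^2+\sum_{k=1}^{d}|\langle T_k^2x,x\rangle|\le 2\sqrt{d}\,w_e(\mathbf{T})\Big(\sum_{k=1}^{d}\|T_kx\|^2\Big)^{1/2}\|x\|.$$
   Context: $\mathbb{B}(\mathscr H)$ denotes the bounded linear operators on $\mathscr H$. For a $d$-tuple $\mathbf{T}=(T_1,\dots,T_d)\in\mathbb{B}(\mathscr H)^d$, the Euclidean operator radius (joint numerical radius) is $w_e(\mathbf{T})=\sup\{(\sum_{k=1}^d|\langle T_kx,x\rangle|^2)^{1/2}: x\in\mathscr H,\ \|x\|=1\}$. *)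

theory Defs
  imports Complex_Main
begin

text \<open>A complex Hilbert space is modelled as an additive group type 'a together with
  a complex scalar multiplication smul and an inner product ip (linear in the first
  argument, conjugate-linear in the second), complete w.r.t. the induced norm.\<close>

definition hnorm :: "('a \<Rightarrow> 'a \<Rightarrow> complex) \<Rightarrow> 'a \<Rightarrow> real" where
  "hnorm ip x = sqrt (Re (ip x x))"

definition complex_hilbert_space ::
  "(complex \<Rightarrow> 'a::ab_group_add \<Rightarrow> 'a) \<Rightarrow> ('a \<Rightarrow> 'a \<Rightarrow> complex) \<Rightarrow> bool" where
  "complex_hilbert_space smul ip \<longleftrightarrow>
     (\<forall>a x y. smul a (x + y) = smul a x + smul a y) \<and>
     (\<forall>a b x. smul (a + b) x = smul a x + smul b x) \<and>
     (\<forall>a b x. smul (a * b) x = smul a (smul b x)) \<and>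
     (\<forall>x. smul 1 x = x) \<and>
     (\<forall>x y z. ip (x + y) z = ip x z + ip y z) \<and>
     (\<forall>a x y. ip (smul a x) y = a * ip x y) \<and>
     (\<forall>x y. ip y x = cnj (ip x y)) \<and>
     (\<forall>x. Im (ip x x) = 0 \<and> 0 \<le> Re (ip x x)) \<and>
     (\<forall>x. ip x x = 0 \<longrightarrow> x = 0) \<and>
     (\<forall>X::nat \<Rightarrow> 'a.
        (\<forall>e>0. \<exists>N. \<forall>m\<ge>N. \<forall>n\<ge>N. hnorm ip (X m - X n) < e) \<longrightarrow>
        (\<exists>L. (\<lambda>n. hnorm ip (X n - L)) \<longlonglongrightarrow> 0))"

definition bounded_operator ::
  "(complex \<Rightarrow> 'a::ab_group_add \<Rightarrow> 'a) \<Rightarrow> ('a \<Rightarrow> 'a \<Rightarrow> complex) \<Rightarrow> ('a \<Rightarrow> 'a) \<Rightarrow> bool" where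
  "bounded_operator smul ip T \<longleftrightarrow>
     (\<forall>x y. T (x + y) = T x + T y) \<and>
     (\<forall>a x. T (smul a x) = smul a (T x)) \<and>
     (\<exists>C. \<forall>x. hnorm ip (T x) \<le> C * hnorm ip x)"

definition euclid_op_radius ::
  "('a \<Rightarrow> 'a \<Rightarrow> complex) \<Rightarrow> nat \<Rightarrow> (nat \<Rightarrow> 'a \<Rightarrow> 'a) \<Rightarrow> real" where
  "euclid_op_radius ip d T =
     Sup {sqrt (\<Sum>k=1..d. (cmod (ip (T k x) x))^2) | x. hnorm ip x = 1}"

end

theory Submission
  imports Defs
begin

text \<open>For one operator A with numerical radius at most W and any r \<ge> 0, pick a unimodular e
  with e^2 <A^2 x, x> = |<A^2 x, x>| and put u, v = x +/- r e A x. Polarization gives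
  <A u, u> - <A v, v> = 2 r cnj e (|A x|^2 + |<A^2 x, x>|), and the parallelogram law gives
  |u|^2 + |v|^2 = 2 (|x|^2 + r^2 |A x|^2); hence
  r (|A x|^2 + |<A^2 x, x>|) \<le> W (|x|^2 + r^2 |A x|^2).
  Every T k has numerical radius at most w_e(T). Summing over k with a common r and optimizing
  r (AM-GM) gives the bound 2 w_e(T) sqrt(d |x|^2) sqrt(\<Sum>k. |T k x|^2).\<close>

lemma exists_unimodular_phase:
  "\<exists>e. cmod e = 1 \<and> e * a = complex_of_real (cmod a) * cnj e"
proof (cases "a = 0")
  case True
  then show ?thesis by (intro exI[of _ 1]) simp
next
  case False
  define e where "e = csqrt (complex_of_real (cmod a) / a)"
  have e2: "e^2 = complex_of_real (cmod a) / a"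
    unfolding e_def by simp
  then have "(cmod e)^2 = 1"
    using False by (simp add: norm_power[symmetric] norm_divide)
  then have e1: "cmod e = 1"
    using norm_ge_zero[of e] by (auto simp: power2_eq_1_iff)
  then have "e * cnj e = 1"
    by (metis complex_norm_square of_real_1 power_one)
  then have "e * a = e^2 * a * cnj e"
    by (simp add: power2_eq_square algebra_simps)
  also have "\<dots> = complex_of_real (cmod a) * cnj e"
    using False by (simp add: e2)
  finally show ?thesis
    using e1 by blast
qed

lemma le_two_mult_sqrt_if_scaled_bound:
  fixes X W P Q :: real
  assumes "0 < P" "0 < Q"
    and scaled: "\<And>r. 0 < r \<Longrightarrow> r * X \<le> W * (P + r^2 * Q)"
  shows "X \<le> 2 * W * sqrt P * sqrt Q"
proof -
  define r where "r = sqrt P / sqrt Q"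
  have r: "0 < r" "r^2 * Q = P"
    using assms(1,2) by (simp_all add: r_def power_divide)
  have "r * sqrt Q = sqrt P"
    using assms(2) by (simp add: r_def)
  have "r * X \<le> W * (P + r^2 * Q)"
    by (rule scaled[OF r(1)])
  also have "\<dots> = 2 * W * (sqrt P * sqrt P)"
    using assms(1) by (simp add: r(2))
  also have "\<dots> = r * (2 * W * sqrt P * sqrt Q)"
    using \<open>r * sqrt Q = sqrt P\<close> by (metis mult.assoc mult.left_commute)
  finally show ?thesis
    using r(1) by simp
qed

locale hilbert_space =
  fixes smul :: "complex \<Rightarrow> 'a::ab_group_add \<Rightarrow> 'a"
    and ip :: "'a \<Rightarrow> 'a \<Rightarrow> complex"
  assumes hilbert: "complex_hilbert_space smul ip"
begin

lemma ip_add_left: "ip (x + y) z = ip x z + ip y z"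
  and ip_smul_left: "ip (smul a x) y = a * ip x y"
  and ip_commute: "ip y x = cnj (ip x y)"
  and Im_ip_self: "Im (ip x x) = 0"
  and Re_ip_self_nonneg: "0 \<le> Re (ip x x)"
  and ip_self_eq_0: "ip x x = 0 \<Longrightarrow> x = 0"
  using hilbert unfolding complex_hilbert_space_def by blast+

lemma ip_add_right: "ip x (y + z) = ip x y + ip x z"
  by (metis ip_commute ip_add_left complex_cnj_add)

lemma ip_smul_right: "ip x (smul a y) = cnj a * ip x y"
  by (metis ip_commute ip_smul_left complex_cnj_mult)

lemma ip_zero_left [simp]: "ip 0 z = 0"
  using ip_add_left[of 0 0 z] by simp

lemma ip_zero_right [simp]: "ip z 0 = 0"
  using ip_add_right[of z 0 0] by simp

lemma ip_expand:
  "ip (a1 + smul s a2) (b1 + smul s b2)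
   = ip a1 b1 + cnj s * ip a1 b2 + s * ip a2 b1 + s * cnj s * ip a2 b2"
  by (simp add: ip_add_left ip_add_right ip_smul_left ip_smul_right algebra_simps)

lemma hnorm_nonneg: "0 \<le> hnorm ip u"
  unfolding hnorm_def using Re_ip_self_nonneg[of u] by simp

lemma hnorm_power2: "(hnorm ip u)^2 = Re (ip u u)"
  unfolding hnorm_def using Re_ip_self_nonneg[of u] by simp

lemma ip_self_eq_hnorm_power2: "ip u u = complex_of_real ((hnorm ip u)^2)"
  using hnorm_power2[of u] Im_ip_self[of u] by (simp add: complex_eq_iff)

lemma hnorm_eq_0_iff [simp]: "hnorm ip u = 0 \<longleftrightarrow> u = 0"
  using ip_self_eq_hnorm_power2[of u] ip_self_eq_0 by (auto simp: hnorm_def)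

lemma hnorm_zero [simp]: "hnorm ip 0 = 0"
  by simp

lemma hnorm_pos_iff: "0 < hnorm ip u \<longleftrightarrow> u \<noteq> 0"
  using hnorm_nonneg[of u] by (simp add: less_le)

lemma cauchy_schwarz: "cmod (ip y z) \<le> hnorm ip y * hnorm ip z"
proof (cases "z = 0")
  case True
  then show ?thesis by simp
next
  case False
  define p where "p = (hnorm ip z)^2"
  have p: "p > 0"
    using False unfolding p_def by (simp add: hnorm_pos_iff)
  define w where "w = ip y z"
  define t where "t = - w / complex_of_real p"
  have "ip (y + smul t z) (y + smul t z)
        = ip y y + (cnj t * w + t * cnj w + t * cnj t * complex_of_real p)"
    using ip_expand[of y t z y z]
    by (simp add: w_def p_def ip_self_eq_hnorm_power2[of z] ip_commute[of z y] add.assoc)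
  also have "\<dots> = ip y y - complex_of_real ((cmod w)^2 / p)"
    using p unfolding t_def
    by (simp add: field_simps complex_norm_square[symmetric] of_real_power)
  finally have "0 \<le> Re (ip y y) - (cmod w)^2 / p"
    using Re_ip_self_nonneg[of "y + smul t z"] by simp
  then have "(cmod w)^2 \<le> (hnorm ip y * hnorm ip z)^2"
    using p by (simp add: hnorm_power2 field_simps p_def power_mult_distrib)
  then show ?thesis
    unfolding w_def using hnorm_nonneg[of y] hnorm_nonneg[of z]
    by (meson mult_nonneg_nonneg power2_le_imp_le)
qed

lemma bounded_operator_add:
  "bounded_operator smul ip A \<Longrightarrow> A (x + y) = A x + A y"
  and bounded_operator_smul:
  "bounded_operator smul ip A \<Longrightarrow> A (smul a x) = smul a (A x)"
  unfolding bounded_operator_def by blast+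

lemma bounded_operator_zero: "bounded_operator smul ip A \<Longrightarrow> A 0 = 0"
  using bounded_operator_add[of A 0 0] by simp

lemma scaled_numerical_radius_bound:
  assumes A: "bounded_operator smul ip A"
    and W: "\<And>u. cmod (ip (A u) u) \<le> W * (hnorm ip u)^2"
    and r: "r \<ge> 0"
  shows "r * (cmod (ip (A (A x)) x) + (hnorm ip (A x))^2)
         \<le> W * ((hnorm ip x)^2 + r^2 * (hnorm ip (A x))^2)"
proof -
  define a where "a = ip (A (A x)) x"
  define b where "b = (hnorm ip (A x))^2"
  obtain e where e1: "cmod e = 1" and ea: "e * a = complex_of_real (cmod a) * cnj e"
    using exists_unimodular_phase by blast
  define c where "c = complex_of_real r * e"
  define u where "u = x + smul c (A x)"
  define v where "v = x + smul (-c) (A x)"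
  have b: "ip (A x) (A x) = complex_of_real b"
    unfolding b_def by (rule ip_self_eq_hnorm_power2)
  have cc: "c * cnj c = complex_of_real (r^2)"
    unfolding c_def using e1
    by (simp add: complex_norm_square[symmetric] power2_eq_square algebra_simps)
  have "ip (A u) u - ip (A v) v = 2 * (cnj c * complex_of_real b + c * a)"
    using A unfolding u_def v_def
    by (simp add: bounded_operator_add bounded_operator_smul ip_expand a_def b algebra_simps)
  also have "\<dots> = complex_of_real (2 * r * (b + cmod a)) * cnj e"
    unfolding c_def using ea by (simp add: algebra_simps)
  finally have "cmod (ip (A u) u - ip (A v) v) = 2 * r * (b + cmod a)"
    using e1 r by (simp only: norm_mult norm_of_real complex_mod_cnj) (simp add: b_def)
  moreover have "(hnorm ip u)^2 + (hnorm ip v)^2 = 2 * (hnorm ip x)^2 + 2 * r^2 * b"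
  proof -
    have "ip u u + ip v v = 2 * ip x x + 2 * complex_of_real (r^2) * complex_of_real b"
      unfolding u_def v_def ip_expand b using cc by (simp add: algebra_simps)
    from arg_cong[OF this, of Re] show ?thesis
      by (simp add: hnorm_power2)
  qed
  moreover have "cmod (ip (A u) u - ip (A v) v) \<le> W * ((hnorm ip u)^2 + (hnorm ip v)^2)"
    unfolding distrib_left using norm_triangle_ineq4 W add_mono order_trans by metis
  ultimately show ?thesis
    unfolding a_def b_def by (simp add: algebra_simps)
qed

lemma bdd_above_euclid_op_radius_set:
  assumes "\<And>k. k \<in> {1..d} \<Longrightarrow> bounded_operator smul ip (T k)"
  shows "bdd_above {sqrt (\<Sum>k=1..d. (cmod (ip (T k x) x))^2) | x. hnorm ip x = 1}"
proof -
  obtain C where C: "\<And>k x. k \<in> {1..d} \<Longrightarrow> hnorm ip (T k x) \<le> C k * hnorm ip x"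
    using assms unfolding bounded_operator_def by metis
  have "cmod (ip (T k z) z)^2 \<le> (C k)^2" if "k \<in> {1..d}" "hnorm ip z = 1" for k z
    using cauchy_schwarz[of "T k z" z] C[of k z] that by (simp add: power_mono)
  then show ?thesis
    by (intro bdd_aboveI[of _ "sqrt (\<Sum>k=1..d. (C k)^2)"])
       (auto intro!: real_sqrt_le_mono sum_mono)
qed

lemma numerical_radius_le_euclid_op_radius:
  assumes B: "\<And>k. k \<in> {1..d} \<Longrightarrow> bounded_operator smul ip (T k)"
    and k: "k \<in> {1..d}"
  shows "cmod (ip (T k u) u) \<le> euclid_op_radius ip d T * (hnorm ip u)^2"
proof (cases "u = 0")
  case True
  then show ?thesis
    using bounded_operator_zero[OF B[OF k]] by simp
next
  case False
  define n where "n = hnorm ip u"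
  have n: "n > 0"
    using False unfolding n_def by (simp add: hnorm_pos_iff)
  define z where "z = smul (complex_of_real (1/n)) u"
  have "ip z z = 1"
    using n unfolding z_def ip_smul_left ip_smul_right
    by (simp add: ip_self_eq_hnorm_power2[of u, folded n_def] power2_eq_square)
  then have z1: "hnorm ip z = 1"
    unfolding hnorm_def by simp
  have "cmod (ip (T k z) z) = sqrt ((cmod (ip (T k z) z))^2)"
    by simp
  also have "\<dots> \<le> sqrt (\<Sum>k=1..d. (cmod (ip (T k z) z))^2)"
    using k by (intro real_sqrt_le_mono member_le_sum) auto
  also have "\<dots> \<le> euclid_op_radius ip d T"
    unfolding euclid_op_radius_def using z1
    by (intro cSup_upper[OF _ bdd_above_euclid_op_radius_set[OF B]]) blast
  finally have "cmod (ip (T k u) u) / n^2 \<le> euclid_op_radius ip d T"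
    unfolding z_def bounded_operator_smul[OF B[OF k]] ip_smul_left ip_smul_right
    using n by (simp add: norm_mult norm_divide power2_eq_square)
  then show ?thesis
    using n unfolding n_def[symmetric] by (simp add: field_simps)
qed

end

theorem theorem2p2:
  fixes smul :: "complex \<Rightarrow> 'a::ab_group_add \<Rightarrow> 'a"
    and ip :: "'a \<Rightarrow> 'a \<Rightarrow> complex"
    and d :: nat
    and T :: "nat \<Rightarrow> 'a \<Rightarrow> 'a"
    and x :: 'a
  assumes "complex_hilbert_space smul ip"
    and "\<And>k. k \<in> {1..d} \<Longrightarrow> bounded_operator smul ip (T k)"
  shows "(\<Sum>k=1..d. (hnorm ip (T k x))^2) + (\<Sum>k=1..d. cmod (ip (T k (T k x)) x))
         \<le> 2 * sqrt (real d) * euclid_op_radius ip d T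
             * sqrt (\<Sum>k=1..d. (hnorm ip (T k x))^2) * hnorm ip x"
proof -
  interpret hilbert_space smul ip by (rule hilbert_space.intro) (rule assms(1))
  define W where "W = euclid_op_radius ip d T"
  define S where "S = (\<Sum>k=1..d. (hnorm ip (T k x))^2)"
  define N where "N = (\<Sum>k=1..d. cmod (ip (T k (T k x)) x))"
  show ?thesis
  proof (cases "S = 0 \<or> x = 0")
    case True
    then have Tx: "\<forall>k\<in>{1..d}. T k x = 0"
      using bounded_operator_zero[OF assms(2)] by (auto simp: S_def sum_nonneg_eq_0_iff)
    then have "N = 0"
      unfolding N_def by (intro sum.neutral) (simp add: bounded_operator_zero assms(2))
    then show ?thesis
      using True Tx by (simp add: S_def N_def)
  next
    case False
    then have S: "0 < S" and n: "0 < hnorm ip x"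
      using sum_nonneg[of "{1..d}" "\<lambda>k. (hnorm ip (T k x))^2"]
      by (auto simp: S_def hnorm_pos_iff)
    then have d: "0 < real d"
      by (cases d) (auto simp: S_def)
    have P: "0 < real d * (hnorm ip x)^2"
      using d n by (intro mult_pos_pos) auto
    have "N + S \<le> 2 * W * sqrt (real d * (hnorm ip x)^2) * sqrt S"
    proof (rule le_two_mult_sqrt_if_scaled_bound)
      fix r :: real
      assume "0 < r"
      then have "r * (N + S) \<le> (\<Sum>k=1..d. W * ((hnorm ip x)^2 + r^2 * (hnorm ip (T k x))^2))"
        unfolding N_def S_def sum.distrib[symmetric] sum_distrib_left W_def
        by (intro sum_mono scaled_numerical_radius_bound assms(2)
            numerical_radius_le_euclid_op_radius) auto
      then show "r * (N + S) \<le> W * (real d * (hnorm ip x)^2 + r^2 * S)"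
        by (simp add: S_def sum.distrib sum_distrib_left algebra_simps)
    qed (use S P in simp_all)
    then show ?thesis
      using n by (simp add: N_def S_def W_def real_sqrt_mult algebra_simps)
  qed
qed

end
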